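(* For every graph $G$, $\hom(S_{2,1^0};G)^3\cdot\hom(S_{2,1^3};G)\ge \hom(S_{2,1^2};G)^3$.
   Context: All graphs are finite; $\hom(H;G)$ is the number of graph homomorphisms from $H$ to $G$. For $k\ge0$, $S_{2,1^k}$ is the tree with vertex set $\{1,\ldots,k+3\}$ and edge set $\{\{1,j\}:2\le j\le k+2\}\cup\{\{k+2,k+3\}\}$; in particular $S_{2,1^0}$ is the path with two edges. *)

theory Defs
  imports Main "HOL-Library.FuncSet"
begin

definition simple_graph :: "'a set \<Rightarrow> 'a set set \<Rightarrow> bool" where
  "simple_graph V E \<longleftrightarrow> finite V \<and> (\<forall>e\<in>E. e \<subseteq> V \<and> card e = 2)"

definition homs :: "'b set \<Rightarrow> 'b set set \<Rightarrow> 'a set \<Rightarrow> 'a set set \<Rightarrow> ('b \<Rightarrow> 'a) set" where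
  "homs VH EH V E = {f \<in> VH \<rightarrow>\<^sub>E V. \<forall>e\<in>EH. f ` e \<in> E}"

definition hom_count :: "'b set \<Rightarrow> 'b set set \<Rightarrow> 'a set \<Rightarrow> 'a set set \<Rightarrow> nat" where
  "hom_count VH EH V E = card (homs VH EH V E)"

definition S21_V :: "nat \<Rightarrow> nat set" where
  "S21_V k = {1..k+3}"

definition S21_E :: "nat \<Rightarrow> nat set set" where
  "S21_E k = {{1, j} | j. 2 \<le> j \<and> j \<le> k + 2} \<union> {{k + 2, k + 3}}"

abbreviation hom_S21 :: "nat \<Rightarrow> 'a set \<Rightarrow> 'a set set \<Rightarrow> nat" where
  "hom_S21 k V E \<equiv> hom_count (S21_V k) (S21_E k) V E"

end

theory Submission
  imports Defs "HOL-Analysis.Convex"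
begin

(* Let d(x) be the degree of x and s(x) the sum of the degrees of the neighbours of x.
   A homomorphism of S_{2,1^k} is determined by the image x of vertex 1, the image y of
   vertex k+2 (a neighbour of x), k further neighbours of x and one neighbour of y, so
   hom(S_{2,1^k}) = sum_x d(x)^k s(x); double counting gives hom(S_{2,1^0}) = sum_x d(x)^2 =: P.
   Hoelder's inequality for three functions, applied to d^2 s = (d^3 s * d s^2 * d^2)^(1/3),
   yields hom(S_{2,1^2})^3 <= hom(S_{2,1^3}) * (sum_x d(x) s(x)^2) * P, and by Cauchy-Schwarz
   s(x)^2 <= d(x) * P, so the middle factor is at most P^2. *)

lemma arith_geo_mean3:
  fixes u v w :: "'a::linordered_idom"
  assumes "0 \<le> u" "0 \<le> v" "0 \<le> w"
  shows "3 * (u * v * w) \<le> u ^ 3 + v ^ 3 + w ^ 3"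
proof -
  have "2 * (u ^ 3 + v ^ 3 + w ^ 3 - 3 * (u * v * w)) = (u + v + w) * ((u - v)\<^sup>2 + (v - w)\<^sup>2 + (w - u)\<^sup>2)"
    by (simp add: algebra_simps power2_eq_square power3_eq_cube)
  also have "\<dots> \<ge> 0" using assms by simp
  finally show ?thesis by simp
qed

lemma holder3_cubes:
  fixes u v w :: "'i \<Rightarrow> real"
  assumes "finite I" and nonneg: "\<And>i. i \<in> I \<Longrightarrow> 0 \<le> u i \<and> 0 \<le> v i \<and> 0 \<le> w i"
  shows "(\<Sum>i\<in>I. u i * v i * w i) ^ 3 \<le> (\<Sum>i\<in>I. u i ^ 3) * (\<Sum>i\<in>I. v i ^ 3) * (\<Sum>i\<in>I. w i ^ 3)"
    (is "?S ^ 3 \<le> ?U * ?V * ?W")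
proof (cases "?U = 0 \<or> ?V = 0 \<or> ?W = 0")
  case True
  then have "\<forall>i\<in>I. u i = 0 \<or> v i = 0 \<or> w i = 0"
    using nonneg by (auto simp: sum_nonneg_eq_0_iff[OF \<open>finite I\<close>])
  then have "?S = 0" by (auto intro: sum.neutral)
  then show ?thesis using nonneg by (simp add: sum_nonneg)
next
  case False
  then have pos: "?U > 0" "?V > 0" "?W > 0"
    using nonneg by (simp_all add: less_le sum_nonneg)
  define \<alpha> \<beta> \<gamma> where "\<alpha> = root 3 ?U" and "\<beta> = root 3 ?V" and "\<gamma> = root 3 ?W"
  have roots: "\<alpha> > 0" "\<beta> > 0" "\<gamma> > 0" "\<alpha> ^ 3 = ?U" "\<beta> ^ 3 = ?V" "\<gamma> ^ 3 = ?W"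
    using pos by (simp_all add: \<alpha>_def \<beta>_def \<gamma>_def)
  have termwise: "3 * (u i * v i * w i) \<le> \<alpha> * \<beta> * \<gamma> * (u i ^ 3 / ?U + v i ^ 3 / ?V + w i ^ 3 / ?W)"
    if "i \<in> I" for i
  proof -
    have "3 * ((u i / \<alpha>) * (v i / \<beta>) * (w i / \<gamma>)) \<le> (u i / \<alpha>) ^ 3 + (v i / \<beta>) ^ 3 + (w i / \<gamma>) ^ 3"
      using nonneg[OF that] roots by (intro arith_geo_mean3) simp_all
    then show ?thesis
      using roots by (simp add: power_divide field_simps)
  qed
  have "3 * ?S = (\<Sum>i\<in>I. 3 * (u i * v i * w i))"
    by (simp add: sum_distrib_left)
  also have "\<dots> \<le> (\<Sum>i\<in>I. \<alpha> * \<beta> * \<gamma> * (u i ^ 3 / ?U + v i ^ 3 / ?V + w i ^ 3 / ?W))"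
    by (rule sum_mono) (rule termwise)
  also have "\<dots> = \<alpha> * \<beta> * \<gamma> * (?U / ?U + ?V / ?V + ?W / ?W)"
    by (simp only: sum_distrib_left[symmetric] sum.distrib sum_divide_distrib[symmetric])
  also have "\<dots> = 3 * (\<alpha> * \<beta> * \<gamma>)"
    using pos by simp
  finally have "?S \<le> \<alpha> * \<beta> * \<gamma>"
    by simp
  then have "?S ^ 3 \<le> (\<alpha> * \<beta> * \<gamma>) ^ 3"
    using nonneg by (intro power_mono) (simp_all add: sum_nonneg)
  then show ?thesis
    using roots by (simp add: power_mult_distrib)
qed

lemma holder3:
  fixes a b c p :: "'i \<Rightarrow> real"
  assumes "finite I"
    and nonneg: "\<And>i. i \<in> I \<Longrightarrow> 0 \<le> a i \<and> 0 \<le> b i \<and> 0 \<le> c i \<and> 0 \<le> p i"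
    and bound: "\<And>i. i \<in> I \<Longrightarrow> p i ^ 3 \<le> a i * b i * c i"
  shows "(\<Sum>i\<in>I. p i) ^ 3 \<le> (\<Sum>i\<in>I. a i) * (\<Sum>i\<in>I. b i) * (\<Sum>i\<in>I. c i)"
proof -
  have "p i \<le> root 3 (a i) * root 3 (b i) * root 3 (c i)" if "i \<in> I" for i
  proof -
    have "p i ^ 3 \<le> (root 3 (a i) * root 3 (b i) * root 3 (c i)) ^ 3"
      using bound[OF that] nonneg[OF that] by (simp add: power_mult_distrib)
    then show ?thesis
      using nonneg[OF that] by simp
  qed
  then have "(\<Sum>i\<in>I. p i) ^ 3 \<le> (\<Sum>i\<in>I. root 3 (a i) * root 3 (b i) * root 3 (c i)) ^ 3"
    using nonneg by (intro power_mono sum_mono sum_nonneg) auto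
  also have "\<dots> \<le> (\<Sum>i\<in>I. root 3 (a i) ^ 3) * (\<Sum>i\<in>I. root 3 (b i) ^ 3) * (\<Sum>i\<in>I. root 3 (c i) ^ 3)"
    using nonneg by (intro holder3_cubes \<open>finite I\<close>) simp
  also have "\<dots> = (\<Sum>i\<in>I. a i) * (\<Sum>i\<in>I. b i) * (\<Sum>i\<in>I. c i)"
    using nonneg by simp
  finally show ?thesis .
qed

definition neighbours :: "'a set \<Rightarrow> 'a set set \<Rightarrow> 'a \<Rightarrow> 'a set" where
  "neighbours V E x = {y \<in> V. {x, y} \<in> E}"

definition degree :: "'a set \<Rightarrow> 'a set set \<Rightarrow> 'a \<Rightarrow> nat" where
  "degree V E x = card (neighbours V E x)"

definition nbr_degree_sum :: "'a set \<Rightarrow> 'a set set \<Rightarrow> 'a \<Rightarrow> nat" where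
  "nbr_degree_sum V E x = (\<Sum>y\<in>neighbours V E x. degree V E y)"

lemma finite_neighbours: "finite V \<Longrightarrow> finite (neighbours V E x)"
  by (simp add: neighbours_def)

lemma sum_neighbours_swap:
  assumes "finite V"
  shows "(\<Sum>x\<in>V. \<Sum>y\<in>neighbours V E x. g y) = (\<Sum>y\<in>V. degree V E y * g y)"
proof -
  have "(\<Sum>x\<in>V. \<Sum>y\<in>neighbours V E x. g y) = (\<Sum>y\<in>V. \<Sum>x\<in>{x \<in> V. {x, y} \<in> E}. g y)"
    unfolding neighbours_def by (intro sum.swap_restrict assms)
  also have "\<dots> = (\<Sum>y\<in>V. degree V E y * g y)"
    by (simp add: degree_def neighbours_def insert_commute)
  finally show ?thesis .
qed

lemma sum_nbr_degree_sum:
  "finite V \<Longrightarrow> (\<Sum>x\<in>V. nbr_degree_sum V E x) = (\<Sum>x\<in>V. degree V E x ^ 2)"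
  unfolding nbr_degree_sum_def by (simp add: sum_neighbours_swap power2_eq_square)

lemma S21_hom_iff:
  "f \<in> homs (S21_V k) (S21_E k) V E \<longleftrightarrow>
     f \<in> extensional {1..k+3} \<and> f 1 \<in> V \<and> (\<forall>j\<in>{2..k+2}. f j \<in> neighbours V E (f 1))
     \<and> f (k+3) \<in> neighbours V E (f (k+2))"
  (is "_ \<longleftrightarrow> ?admissible")
proof
  assume "f \<in> homs (S21_V k) (S21_E k) V E"
  then have f: "f \<in> {1..k+3} \<rightarrow>\<^sub>E V" and edges: "\<And>e. e \<in> S21_E k \<Longrightarrow> f ` e \<in> E"
    by (auto simp: homs_def S21_V_def)
  have "{f 1, f j} \<in> E" if "j \<in> {2..k+2}" for j
    using edges[of "{1, j}"] that by (auto simp: S21_E_def)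
  moreover have "{f (k+2), f (k+3)} \<in> E"
    using edges[of "{k+2, k+3}"] by (simp add: S21_E_def)
  ultimately show ?admissible
    using f by (auto simp: neighbours_def PiE_iff)
next
  assume f: ?admissible
  have "f i \<in> V" if i: "i \<in> {1..k+3}" for i
  proof -
    consider "i = 1" | "i \<in> {2..k+2}" | "i = k+3" using i by fastforce
    then show ?thesis using f by cases (auto simp: neighbours_def)
  qed
  moreover have "f ` e \<in> E" if "e \<in> S21_E k" for e
    using that f by (auto simp: S21_E_def neighbours_def)
  ultimately show "f \<in> homs (S21_V k) (S21_E k) V E"
    using f by (auto simp: homs_def S21_V_def PiE_iff)
qed

definition S21_fibre :: "nat \<Rightarrow> 'a set \<Rightarrow> 'a set set \<Rightarrow> 'a \<Rightarrow> 'a \<Rightarrow> (nat \<Rightarrow> 'a) set" where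
  "S21_fibre k V E x y = (\<Pi>\<^sub>E i\<in>{1..k+3}.
     if i = 1 then {x} else if i = k+2 then {y}
     else if i = k+3 then neighbours V E y else neighbours V E x)"

lemma S21_V_split: "{1..k+3} = (insert 1 (insert (k+2) (insert (k+3) {2..k+1}))::nat set)"
  by auto

lemma mem_S21_fibre_iff:
  "f \<in> S21_fibre k V E x y \<longleftrightarrow>
     f \<in> extensional {1..k+3} \<and> f 1 = x \<and> f (k+2) = y \<and> (\<forall>j\<in>{2..k+1}. f j \<in> neighbours V E x)
     \<and> f (k+3) \<in> neighbours V E y"
  unfolding S21_fibre_def PiE_iff S21_V_split by auto

lemma homs_S21_eq_Union_fibres:
  "homs (S21_V k) (S21_E k) V E = (\<Union>x\<in>V. \<Union>y\<in>neighbours V E x. S21_fibre k V E x y)"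
proof -
  have "{2..k+2} = insert (k+2) {2..k+1}" by auto
  then show ?thesis
    by (auto simp: S21_hom_iff mem_S21_fibre_iff)
qed

lemma card_S21_fibre: "card (S21_fibre k V E x y) = degree V E x ^ k * degree V E y"
proof -
  let ?F = "\<lambda>i. if i = 1 then {x} else if i = k+2 then {y}
              else if i = k+3 then neighbours V E y else neighbours V E x"
  have "card (S21_fibre k V E x y) = (\<Prod>i\<in>{1..k+3}. card (?F i))"
    by (simp add: S21_fibre_def card_PiE)
  also have "\<dots> = degree V E y * (\<Prod>i\<in>{2..k+1}. card (?F i))"
    unfolding S21_V_split by (simp add: degree_def)
  also have "(\<Prod>i\<in>{2..k+1}. card (?F i)) = degree V E x ^ k"
    by (simp add: degree_def)
  finally show ?thesis by simp
qed

lemma hom_S21_eq_sum: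
  assumes "finite V"
  shows "hom_S21 k V E = (\<Sum>x\<in>V. degree V E x ^ k * nbr_degree_sum V E x)"
proof -
  have fibre_finite: "finite (S21_fibre k V E x y)" for x y
    unfolding S21_fibre_def by (intro finite_PiE) (auto intro: finite_neighbours assms)
  have fibre_disjoint: "S21_fibre k V E x y \<inter> S21_fibre k V E x' y' = {}"
    if "x \<noteq> x' \<or> y \<noteq> y'" for x y x' y'
    using that by (auto simp: mem_S21_fibre_iff)
  have "hom_S21 k V E = (\<Sum>x\<in>V. card (\<Union>y\<in>neighbours V E x. S21_fibre k V E x y))"
    unfolding hom_count_def homs_S21_eq_Union_fibres
  proof (rule card_UN_disjoint[OF assms])
    show "\<forall>x\<in>V. finite (\<Union>y\<in>neighbours V E x. S21_fibre k V E x y)"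
      by (simp add: finite_neighbours assms fibre_finite)
  qed (use fibre_disjoint in blast)
  also have "\<dots> = (\<Sum>x\<in>V. \<Sum>y\<in>neighbours V E x. card (S21_fibre k V E x y))"
    by (intro sum.cong refl card_UN_disjoint finite_neighbours assms)
      (use fibre_finite fibre_disjoint in blast)+
  also have "\<dots> = (\<Sum>x\<in>V. degree V E x ^ k * nbr_degree_sum V E x)"
    by (simp add: card_S21_fibre nbr_degree_sum_def sum_distrib_left)
  finally show ?thesis .
qed

lemma nbr_degree_sum_sq_le:
  assumes "finite V"
  shows "real (nbr_degree_sum V E x) ^ 2 \<le> real (degree V E x) * (\<Sum>y\<in>V. real (degree V E y) ^ 2)"
proof -
  have "real (nbr_degree_sum V E x) ^ 2 \<le>
        (\<Sum>y\<in>neighbours V E x. real (degree V E y) ^ 2) * real (degree V E x)"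
    using sum_squared_le_sum_of_squares[of "\<lambda>y. real (degree V E y)" "neighbours V E x"]
    by (simp add: nbr_degree_sum_def degree_def)
  also have "\<dots> \<le> (\<Sum>y\<in>V. real (degree V E y) ^ 2) * real (degree V E x)"
    by (intro mult_right_mono sum_mono2 assms) (auto simp: neighbours_def)
  finally show ?thesis by (simp add: mult.commute)
qed

lemma sum_degree_mult_nbr_degree_sum_sq_le:
  assumes "finite V"
  shows "(\<Sum>x\<in>V. real (degree V E x) * real (nbr_degree_sum V E x) ^ 2)
         \<le> (\<Sum>x\<in>V. real (degree V E x) ^ 2) ^ 2"
proof -
  let ?P = "\<Sum>y\<in>V. real (degree V E y) ^ 2"
  have "(\<Sum>x\<in>V. real (degree V E x) * real (nbr_degree_sum V E x) ^ 2)
        \<le> (\<Sum>x\<in>V. real (degree V E x) * (real (degree V E x) * ?P))"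
    by (intro sum_mono mult_left_mono nbr_degree_sum_sq_le assms) simp
  also have "\<dots> = ?P ^ 2"
    by (simp add: power2_eq_square sum_distrib_right mult.assoc)
  finally show ?thesis .
qed

theorem theorem3p2:
  fixes V :: "'a set" and E :: "'a set set"
  assumes "simple_graph V E"
  shows "hom_S21 0 V E ^ 3 * hom_S21 3 V E \<ge> hom_S21 2 V E ^ 3"
proof -
  have fin: "finite V" using assms by (simp add: simple_graph_def)
  define d s where "d x = real (degree V E x)" and "s x = real (nbr_degree_sum V E x)" for x
  define P where "P = (\<Sum>x\<in>V. d x ^ 2)"
  have hom: "real (hom_S21 k V E) = (\<Sum>x\<in>V. d x ^ k * s x)" for k
    by (simp add: hom_S21_eq_sum[OF fin] d_def s_def)
  have hom0: "real (hom_S21 0 V E) = P"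
    using arg_cong[OF sum_nbr_degree_sum[OF fin], of real] by (simp add: hom P_def d_def s_def)
  have "real (hom_S21 2 V E) ^ 3 \<le> real (hom_S21 3 V E) * (\<Sum>x\<in>V. d x * s x ^ 2) * P"
    unfolding hom P_def
    by (rule holder3[OF fin]) (simp_all add: d_def s_def power_mult_distrib eval_nat_numeral algebra_simps)
  also have "\<dots> \<le> real (hom_S21 3 V E) * P ^ 2 * P"
    using sum_degree_mult_nbr_degree_sum_sq_le[OF fin, of E]
    by (intro mult_right_mono mult_left_mono) (simp_all add: P_def d_def s_def sum_nonneg)
  also have "\<dots> = real (hom_S21 0 V E ^ 3 * hom_S21 3 V E)"
    by (simp add: hom0 power2_eq_square power3_eq_cube)
  finally show ?thesis
    by (metis of_nat_le_iff of_nat_power)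
qed

end
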